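(* Let $f(a,b,c,d,e,x,y)$ be analytic in a neighbourhood of the origin of $\mathbb{C}^7$, and for fixed $(a,b,c,d,e)$ write $F(X,Y)=f(a,b,c,d,e,X,Y)$. The following are equivalent. (i) In some neighbourhood of the origin, $f$ satisfies $$x\Big\{F(xq,y)-F(xq,yq)-(d+e)q^{-1}\big[F(xq,yq)-F(xq,yq^2)\big]+de\,q^{-2}\big[F(xq,yq^2)-F(xq,yq^3)\big]\Big\}$$ $$=y\Big\{\big[F(xq,yq)-F(x,yq)\big]-(a+b+c)\big[F(xq,yq^2)-F(x,yq^2)\big]+(ab+ac+bc)\big[F(xq,yq^3)-F(x,yq^3)\big]-abc\big[F(xq,yq^4)-F(x,yq^4)\big]\Big\}.$$ (ii) There exist functions $\mu_n=\mu_n(a,b,c,d,e)$, $n\ge0$, defined near the origin of $\mathbb{C}^5$, such that $$f=\sum_{n\ge0}\mu_n\,\psi_n^{(a,b,c;d,e)}(x,y|q).$$ This identity is meant as an identity of power series in $(x,y)$: for all $j,k\ge0$, the coefficient of $x^jy^k$ in the Taylor expansion of $f$ in $(x,y)$ equals $\mu_{j+k}$ times the coefficient of $x^jy^k$ in $\psi_{j+k}^{(a,b,c;d,e)}(x,y|q)$.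
   Context: Throughout, $0<q<1$. For $\alpha\in\mathbb{C}$, $(\alpha;q)_0=1$, $(\alpha;q)_n=\prod_{j=0}^{n-1}(1-\alpha q^j)$, $(\alpha;q)_\infty=\prod_{j\ge0}(1-\alpha q^j)$, and $(\alpha_1,\dots,\alpha_r;q)_n=\prod_i(\alpha_i;q)_n$. The $q$-binomial coefficient is $\begin{bmatrix}n\\k\end{bmatrix}=\frac{(q;q)_n}{(q;q)_k(q;q)_{n-k}}$. The polynomials $\psi_n$ are $$\psi_n^{(a,b,c;d,e)}(x,y|q)=\sum_{k=0}^n\begin{bmatrix}n\\k\end{bmatrix}\frac{(-1)^kq^{k(k-n)}(a,b,c;q)_k}{(d,e;q)_k}x^{n-k}y^k,$$ with $d,e\notin\{q^{-m}:m\ge0\}$. *)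

theory Defs
  imports "HOL-Analysis.Analysis"
begin

definition qpoch :: "complex \<Rightarrow> real \<Rightarrow> nat \<Rightarrow> complex" where
  "qpoch \<alpha> q n = (\<Prod>j<n. 1 - \<alpha> * complex_of_real q ^ j)"

definition qbinom :: "real \<Rightarrow> nat \<Rightarrow> nat \<Rightarrow> complex" where
  "qbinom q n k = qpoch (complex_of_real q) q n /
      (qpoch (complex_of_real q) q k * qpoch (complex_of_real q) q (n - k))"

text \<open>Coefficient of x^(n-k) y^k in psi_n^(a,b,c;d,e)(x,y|q), for k \<le> n.\<close>
definition psi_coeff :: "complex \<Rightarrow> complex \<Rightarrow> complex \<Rightarrow> complex \<Rightarrow> complex \<Rightarrow> real
    \<Rightarrow> nat \<Rightarrow> nat \<Rightarrow> complex" where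
  "psi_coeff a b c d e q n k =
     qbinom q n k * (-1) ^ k * complex_of_real (q powi (int k * (int k - int n))) *
     (qpoch a q k * qpoch b q k * qpoch c q k) / (qpoch d q k * qpoch e q k)"

definition psi :: "complex \<Rightarrow> complex \<Rightarrow> complex \<Rightarrow> complex \<Rightarrow> complex \<Rightarrow> real
    \<Rightarrow> nat \<Rightarrow> complex \<Rightarrow> complex \<Rightarrow> complex" where
  "psi a b c d e q n x y = (\<Sum>k\<le>n. psi_coeff a b c d e q n k * x ^ (n - k) * y ^ k)"

text \<open>Analyticity of a function of 7 complex variables in a neighbourhood of the origin:
  it is given on some polydisc around 0 by a convergent (unconditionally, equivalently
  absolutely) multivariate power series.\<close>
definition analytic_at_origin7 ::
  "(complex \<Rightarrow> complex \<Rightarrow> complex \<Rightarrow> complex \<Rightarrow> complex \<Rightarrow> complex \<Rightarrow> complex \<Rightarrow> complex) \<Rightarrow> bool"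
where
  "analytic_at_origin7 f \<longleftrightarrow>
     (\<exists>r>0. \<exists>C :: nat \<times> nat \<times> nat \<times> nat \<times> nat \<times> nat \<times> nat \<Rightarrow> complex.
        \<forall>z1 z2 z3 z4 z5 z6 z7. norm z1 < r \<and> norm z2 < r \<and> norm z3 < r \<and> norm z4 < r \<and>
           norm z5 < r \<and> norm z6 < r \<and> norm z7 < r \<longrightarrow>
           ((\<lambda>(i1, i2, i3, i4, i5, i6, i7). C (i1, i2, i3, i4, i5, i6, i7) *
               z1 ^ i1 * z2 ^ i2 * z3 ^ i3 * z4 ^ i4 * z5 ^ i5 * z6 ^ i6 * z7 ^ i7)
             has_sum f z1 z2 z3 z4 z5 z6 z7) UNIV)"

definition taylor_coeff2 :: "(complex \<Rightarrow> complex \<Rightarrow> complex) \<Rightarrow> nat \<Rightarrow> nat \<Rightarrow> complex" where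
  "taylor_coeff2 F j k =
     (deriv ^^ j) (\<lambda>X. (deriv ^^ k) (\<lambda>Y. F X Y) 0) 0 / (fact j * fact k)"

end

theory Submission
  imports Defs
begin

(* Write F(x,y) = sum G(j,k) x^j y^k. Both sides of the q-difference equation are again
   power series in (x,y): the left side has coefficient q^j L_k G(j,k) at x^(j+1) y^k and the
   right side R_(j,k) G(j,k) at x^j y^(k+1), where
     L_k = (1 - q^k)(1 - d q^(k-1))(1 - e q^(k-1)),
     R_(j,k) = (q^j - 1) q^k (1 - a q^k)(1 - b q^k)(1 - c q^k).
   By uniqueness of Taylor coefficients, the equation is therefore equivalent to the
   recurrence q^j L_(k+1) G(j,k+1) = R_(j+1,k) G(j+1,k). The coefficients of psi_n satisfy the
   same recurrence, and L_(k+1) <> 0 for small d, e, so its solutions are exactly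
   G(j,k) = G(j+k,0) [x^j y^k] psi_(j+k), which is the expansion with mu_n = G(n,0). *)

lemma has_sum_diff:
  fixes f g :: "'a \<Rightarrow> 'b::topological_ab_group_add"
  assumes "(f has_sum a) A" and "(g has_sum b) A"
  shows "((\<lambda>x. f x - g x) has_sum (a - b)) A"
  using has_sum_add[OF assms(1), where g = "\<lambda>x. - g x" and b = "- b"]
    has_sum_uminus[where f = g and a = "- b"] assms(2)
  by simp

lemma has_sum_reindex_zero_outside:
  assumes "inj h" and "\<And>p. p \<notin> range h \<Longrightarrow> g p = 0" and "((g \<circ> h) has_sum s) UNIV"
  shows "(g has_sum s) UNIV"
proof -
  have "(g has_sum s) (range h)"
    using assms(1,3) has_sum_reindex by blast
  then show ?thesis
    by (rule has_sum_cong_neutral[THEN iffD1, rotated -1]) (use assms(2) in auto)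
qed

lemma has_sum_factor_right_infsum:
  fixes W :: "'i \<Rightarrow> 'a::{t2_space, topological_semigroup_mult, division_ring}"
  assumes "(\<lambda>i. W i * c) summable_on UNIV"
  shows "((\<lambda>i. W i * c) has_sum (\<Sum>\<^sub>\<infinity>i. W i) * c) UNIV"
proof (cases "c = 0")
  case False
  then have "W summable_on UNIV"
    using assms summable_on_cmult_left' by blast
  then show ?thesis
    by (intro has_sum_cmult_left has_sum_infsum)
qed simp

definition has_power_series2 ::
  "(complex \<Rightarrow> complex \<Rightarrow> complex) \<Rightarrow> (nat \<times> nat \<Rightarrow> complex) \<Rightarrow> real \<Rightarrow> bool"
where
  "has_power_series2 F G r \<longleftrightarrow>
     (\<forall>x y. norm x < r \<longrightarrow> norm y < r \<longrightarrow>
        ((\<lambda>(j, k). G (j, k) * x ^ j * y ^ k) has_sum F x y) UNIV)"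

lemma has_power_series2_mono:
  "has_power_series2 F G r \<Longrightarrow> r' \<le> r \<Longrightarrow> has_power_series2 F G r'"
  by (auto simp: has_power_series2_def)

lemma higher_deriv_power_series_at_0:
  fixes b :: "nat \<Rightarrow> complex"
  assumes r: "r > 0" and h: "\<And>y. norm y < r \<Longrightarrow> ((\<lambda>k. b k * y ^ k) has_sum h y) UNIV"
  shows "(deriv ^^ n) h 0 = fact n * b n"
proof -
  have "summable (\<lambda>k. b k * complex_of_real (r/2) ^ k)"
    using h[of "complex_of_real (r/2)"] r by (auto intro: sums_summable has_sum_imp_sums)
  then have "fps_conv_radius (Abs_fps b) \<ge> r/2"
    unfolding fps_conv_radius_def using conv_radius_geI r by fastforce
  then have "fps_conv_radius (Abs_fps b) > 0"
    using r by (metis ereal_less(2) half_gt_zero order_less_le_trans)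
  moreover have "eventually (\<lambda>z. eval_fps (Abs_fps b) z = h z) (nhds 0)"
    using eventually_nhds_ball[OF r, of 0]
    by eventually_elim (auto simp: eval_fps_def sums_iff dest!: h has_sum_imp_sums)
  ultimately have "h has_fps_expansion Abs_fps b"
    by (simp add: has_fps_expansion_def)
  then show ?thesis
    using fps_nth_fps_expansion by fastforce
qed

lemma has_power_series2_summable_column:
  assumes F: "has_power_series2 F G r" and x: "norm x < r"
  shows "(\<lambda>j. G (j, k) * x ^ j) summable_on UNIV"
proof -
  define y where "y = complex_of_real (r/2)"
  have "r > 0"
    using x norm_ge_zero[of x] by linarith
  then have y: "norm y < r" "y \<noteq> 0"
    by (auto simp: y_def)
  have "((\<lambda>(j, k). G (j, k) * x ^ j * y ^ k) has_sum F x y) (UNIV \<times> UNIV)"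
    using F x y by (simp add: has_power_series2_def)
  then have "(\<lambda>(j, k). G (j, k) * x ^ j * y ^ k) summable_on UNIV \<times> UNIV"
    by (auto simp: summable_on_def)
  then have "(\<lambda>(k, j). G (j, k) * x ^ j * y ^ k) summable_on UNIV \<times> UNIV"
    by (subst (asm) summable_on_swap) (simp add: case_prod_unfold)
  then have "(\<lambda>j. G (j, k) * x ^ j * y ^ k) summable_on UNIV"
    using summable_on_SigmaD1[of "\<lambda>k j. G (j, k) * x ^ j * y ^ k" UNIV "\<lambda>_. UNIV"] by auto
  then show ?thesis
    using summable_on_cmult_left'[of "y ^ k" "\<lambda>j. G (j, k) * x ^ j"] y by simp
qed

lemma has_power_series2_iterated:
  assumes F: "has_power_series2 F G r" and xy: "norm x < r" "norm y < r"
  shows "((\<lambda>k. (\<Sum>\<^sub>\<infinity>j. G (j, k) * x ^ j) * y ^ k) has_sum F x y) UNIV"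
proof -
  have "((\<lambda>(j, k). G (j, k) * x ^ j * y ^ k) has_sum F x y) (UNIV \<times> UNIV)"
    using F xy by (simp add: has_power_series2_def)
  then have "((\<lambda>(k, j). G (j, k) * x ^ j * y ^ k) has_sum F x y) (UNIV \<times> UNIV)"
    by (subst (asm) has_sum_swap) (simp add: case_prod_unfold)
  then show ?thesis
  proof (rule has_sum_Sigma')
    fix k
    show "((\<lambda>j. (\<lambda>(k, j). G (j, k) * x ^ j * y ^ k) (k, j)) has_sum
        (\<Sum>\<^sub>\<infinity>j. G (j, k) * x ^ j) * y ^ k) UNIV"
      using has_sum_cmult_left[OF has_sum_infsum[OF has_power_series2_summable_column[OF F xy(1)]]]
      by simp
  qed
qed

lemma taylor_coeff2_power_series2:
  assumes r: "r > 0" and F: "has_power_series2 F G r"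
  shows "taylor_coeff2 F j k = G (j, k)"
proof -
  have "(deriv ^^ k) (F x) 0 = fact k * (\<Sum>\<^sub>\<infinity>j. G (j, k) * x ^ j)" if "norm x < r" for x
    by (rule higher_deriv_power_series_at_0[OF r has_power_series2_iterated[OF F that]])
  then have "((\<lambda>j. (fact k * G (j, k)) * x ^ j) has_sum (deriv ^^ k) (F x) 0) UNIV"
    if "norm x < r" for x
    using has_sum_cmult_right[OF has_sum_infsum[OF has_power_series2_summable_column[OF F that]]]
      that by (simp add: mult.assoc)
  then have "(deriv ^^ j) (\<lambda>x. (deriv ^^ k) (F x) 0) 0 = fact j * (fact k * G (j, k))"
    by (rule higher_deriv_power_series_at_0[OF r])
  then show ?thesis
    by (simp add: taylor_coeff2_def)
qed

lemma has_power_series2_eq_iff: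
  assumes r: "r > 0" and F: "has_power_series2 F A r" and H: "has_power_series2 H B r"
  shows "(\<forall>x y. norm x < r \<longrightarrow> norm y < r \<longrightarrow> F x y = H x y) \<longleftrightarrow> A = B"
proof
  assume "\<forall>x y. norm x < r \<longrightarrow> norm y < r \<longrightarrow> F x y = H x y"
  then have "has_power_series2 F B r"
    using H by (simp add: has_power_series2_def)
  then show "A = B"
    using taylor_coeff2_power_series2[OF r F] taylor_coeff2_power_series2[OF r] by auto
next
  assume "A = B"
  with F H show "\<forall>x y. norm x < r \<longrightarrow> norm y < r \<longrightarrow> F x y = H x y"
    unfolding has_power_series2_def using has_sum_unique by blast
qed

lemma analytic_at_origin7_power_series2:
  assumes "analytic_at_origin7 f"
  obtains r where "r > 0"
    and "\<And>a b c d e. norm a < r \<Longrightarrow> norm b < r \<Longrightarrow> norm c < r \<Longrightarrow> norm d < r \<Longrightarrow> norm e < r \<Longrightarrow>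
      has_power_series2 (f a b c d e) (\<lambda>(j, k). taylor_coeff2 (f a b c d e) j k) r"
proof -
  from assms obtain r and C :: "nat \<times> nat \<times> nat \<times> nat \<times> nat \<times> nat \<times> nat \<Rightarrow> complex"
    where r: "r > 0" and C: "\<And>z1 z2 z3 z4 z5 z6 z7.
      norm z1 < r \<and> norm z2 < r \<and> norm z3 < r \<and> norm z4 < r \<and>
      norm z5 < r \<and> norm z6 < r \<and> norm z7 < r \<Longrightarrow>
      ((\<lambda>(i1, i2, i3, i4, i5, i6, i7). C (i1, i2, i3, i4, i5, i6, i7) *
          z1 ^ i1 * z2 ^ i2 * z3 ^ i3 * z4 ^ i4 * z5 ^ i5 * z6 ^ i6 * z7 ^ i7)
        has_sum f z1 z2 z3 z4 z5 z6 z7) UNIV"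
    unfolding analytic_at_origin7_def by blast
  show thesis
  proof (rule that[OF r])
    fix a b c d e :: complex
    assume abcde: "norm a < r" "norm b < r" "norm c < r" "norm d < r" "norm e < r"
    define W where "W j k = (\<lambda>(i1, i2, i3, i4, i5).
      C (i1, i2, i3, i4, i5, j, k) * a ^ i1 * b ^ i2 * c ^ i3 * d ^ i4 * e ^ i5)" for j k
    define G where "G = (\<lambda>(j, k). \<Sum>\<^sub>\<infinity>i. W j k i)"
    have "has_power_series2 (f a b c d e) G r"
      unfolding has_power_series2_def
    proof (intro allI impI)
      fix x y :: complex
      assume xy: "norm x < r" "norm y < r"
      have "((\<lambda>(i1, i2, i3, i4, i5, j, k). C (i1, i2, i3, i4, i5, j, k) *
          a ^ i1 * b ^ i2 * c ^ i3 * d ^ i4 * e ^ i5 * x ^ j * y ^ k) has_sum f a b c d e x y) UNIV"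
        using C abcde xy by blast
      then have "((\<lambda>((j, k), i). W j k i * (x ^ j * y ^ k)) has_sum f a b c d e x y) (UNIV \<times> UNIV)"
        by (rule has_sum_reindex_bij_witness[
              where i = "\<lambda>((j, k), i1, i2, i3, i4, i5). (i1, i2, i3, i4, i5, j, k)"
                and j = "\<lambda>(i1, i2, i3, i4, i5, j, k). ((j, k), i1, i2, i3, i4, i5)",
              THEN iffD1, rotated -1])
           (auto simp: W_def mult.assoc)
      then show "((\<lambda>(j, k). G (j, k) * x ^ j * y ^ k) has_sum f a b c d e x y) UNIV"
      proof (rule has_sum_Sigma')
        fix jk :: "nat \<times> nat"
        obtain j k where jk: "jk = (j, k)"
          by fastforce
        have "(\<lambda>((j, k), i). W j k i * (x ^ j * y ^ k)) summable_on UNIV \<times> UNIV"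
          using \<open>(_ has_sum _) (UNIV \<times> UNIV)\<close> has_sum_imp_summable by blast
        then have "(\<lambda>i. W j k i * (x ^ j * y ^ k)) summable_on UNIV"
          using summable_on_SigmaD1[of "\<lambda>jk i. (case jk of (j, k) \<Rightarrow> W j k i * (x ^ j * y ^ k))"
              UNIV "\<lambda>_. UNIV" "(j, k)"]
          by (simp add: case_prod_unfold)
        then show "((\<lambda>i. (\<lambda>((j, k), i). W j k i * (x ^ j * y ^ k)) (jk, i)) has_sum
            (\<lambda>(j, k). G (j, k) * x ^ j * y ^ k) jk) UNIV"
          using has_sum_factor_right_infsum by (simp add: jk G_def mult.assoc)
      qed
    qed
    moreover have "(\<lambda>(j, k). taylor_coeff2 (f a b c d e) j k) = G"
      using taylor_coeff2_power_series2[OF r calculation] by auto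
    ultimately show "has_power_series2 (f a b c d e) (\<lambda>(j, k). taylor_coeff2 (f a b c d e) j k) r"
      by simp
  qed
qed

definition mult_x_coeffs :: "(nat \<times> nat \<Rightarrow> 'a::zero) \<Rightarrow> nat \<times> nat \<Rightarrow> 'a" where
  "mult_x_coeffs G = (\<lambda>(j, k). if j = 0 then 0 else G (j - 1, k))"

definition mult_y_coeffs :: "(nat \<times> nat \<Rightarrow> 'a::zero) \<Rightarrow> nat \<times> nat \<Rightarrow> 'a" where
  "mult_y_coeffs G = (\<lambda>(j, k). if k = 0 then 0 else G (j, k - 1))"

lemma has_sum_mult_x_coeffs:
  fixes G :: "nat \<times> nat \<Rightarrow> complex"
  assumes "((\<lambda>(j, k). G (j, k) * x ^ Suc j * y ^ k) has_sum s) UNIV"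
  shows "((\<lambda>(j, k). mult_x_coeffs G (j, k) * x ^ j * y ^ k) has_sum s) UNIV"
proof (rule has_sum_reindex_zero_outside)
  show "inj (\<lambda>(j, k). (Suc j, k))"
    by (auto simp: inj_def)
  show "(\<lambda>(j, k). mult_x_coeffs G (j, k) * x ^ j * y ^ k) p = 0"
    if "p \<notin> range (\<lambda>(j, k). (Suc j, k))" for p
    using that by (cases p; cases "fst p") (auto simp: mult_x_coeffs_def)
qed (use assms in \<open>simp add: mult_x_coeffs_def o_def case_prod_unfold\<close>)

lemma has_sum_mult_y_coeffs:
  fixes G :: "nat \<times> nat \<Rightarrow> complex"
  assumes "((\<lambda>(j, k). G (j, k) * x ^ j * y ^ Suc k) has_sum s) UNIV"
  shows "((\<lambda>(j, k). mult_y_coeffs G (j, k) * x ^ j * y ^ k) has_sum s) UNIV"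
proof (rule has_sum_reindex_zero_outside)
  show "inj (\<lambda>(j, k). (j, Suc k))"
    by (auto simp: inj_def)
  show "(\<lambda>(j, k). mult_y_coeffs G (j, k) * x ^ j * y ^ k) p = 0"
    if "p \<notin> range (\<lambda>(j, k). (j, Suc k))" for p
    using that by (cases p; cases "snd p") (auto simp: mult_y_coeffs_def)
qed (use assms in \<open>simp add: mult_y_coeffs_def o_def case_prod_unfold\<close>)

lemma mult_x_coeffs_eq_mult_y_coeffs_iff:
  assumes "\<And>j. A (j, 0) = 0" and "\<And>k. B (0, k) = 0"
  shows "mult_x_coeffs A = mult_y_coeffs B \<longleftrightarrow> (\<forall>j k. A (j, Suc k) = B (Suc j, k))"
proof
  assume "mult_x_coeffs A = mult_y_coeffs B"
  then have "mult_x_coeffs A (Suc j, Suc k) = mult_y_coeffs B (Suc j, Suc k)" for j k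
    by simp
  then show "\<forall>j k. A (j, Suc k) = B (Suc j, k)"
    by (simp add: mult_x_coeffs_def mult_y_coeffs_def)
next
  assume "\<forall>j k. A (j, Suc k) = B (Suc j, k)"
  then show "mult_x_coeffs A = mult_y_coeffs B"
    using assms
    by (auto simp: fun_eq_iff mult_x_coeffs_def mult_y_coeffs_def gr0_conv_Suc not0_implies_Suc)
qed

definition qdiff_lhs ::
  "complex \<Rightarrow> complex \<Rightarrow> complex \<Rightarrow> (complex \<Rightarrow> complex \<Rightarrow> complex) \<Rightarrow> complex \<Rightarrow> complex \<Rightarrow> complex"
where
  "qdiff_lhs Q d e F x y =
     x * (F (x*Q) y - F (x*Q) (y*Q)
          - (d + e) / Q * (F (x*Q) (y*Q) - F (x*Q) (y*Q^2))
          + d * e / Q^2 * (F (x*Q) (y*Q^2) - F (x*Q) (y*Q^3)))"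

definition qdiff_rhs :: "complex \<Rightarrow> complex \<Rightarrow> complex \<Rightarrow> complex \<Rightarrow>
    (complex \<Rightarrow> complex \<Rightarrow> complex) \<Rightarrow> complex \<Rightarrow> complex \<Rightarrow> complex"
where
  "qdiff_rhs Q a b c F x y =
     y * ((F (x*Q) (y*Q) - F x (y*Q))
          - (a + b + c) * (F (x*Q) (y*Q^2) - F x (y*Q^2))
          + (a*b + a*c + b*c) * (F (x*Q) (y*Q^3) - F x (y*Q^3))
          - a*b*c * (F (x*Q) (y*Q^4) - F x (y*Q^4)))"

definition qdiff_lhs_symbol :: "complex \<Rightarrow> complex \<Rightarrow> complex \<Rightarrow> nat \<Rightarrow> complex" where
  "qdiff_lhs_symbol Q d e k = (1 - Q ^ k) * (1 - d * Q ^ k / Q) * (1 - e * Q ^ k / Q)"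

definition qdiff_rhs_symbol :: "complex \<Rightarrow> complex \<Rightarrow> complex \<Rightarrow> complex \<Rightarrow> nat \<Rightarrow> nat \<Rightarrow> complex" where
  "qdiff_rhs_symbol Q a b c j k =
     (Q ^ j - 1) * Q ^ k * (1 - a * Q ^ k) * (1 - b * Q ^ k) * (1 - c * Q ^ k)"

lemma qdiff_lhs_monomial:
  assumes "Q \<noteq> 0"
  shows "qdiff_lhs Q d e (\<lambda>x y. x ^ j * y ^ k) x y =
    Q ^ j * qdiff_lhs_symbol Q d e k * x ^ Suc j * y ^ k"
proof -
  define v where "v = Q ^ k"
  have "(y * Q ^ m) ^ k = y ^ k * v ^ m" for m
    by (simp add: v_def power_mult_distrib mult.commute flip: power_mult)
  then show ?thesis
    using assms
    by (simp add: qdiff_lhs_def qdiff_lhs_symbol_def power_mult_distrib v_def[symmetric]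
        field_simps power2_eq_square power3_eq_cube)
qed

lemma qdiff_rhs_monomial:
  "qdiff_rhs Q a b c (\<lambda>x y. x ^ j * y ^ k) x y =
    qdiff_rhs_symbol Q a b c j k * x ^ j * y ^ Suc k"
proof -
  define v where "v = Q ^ k"
  have "(y * Q ^ m) ^ k = y ^ k * v ^ m" for m
    by (simp add: v_def power_mult_distrib mult.commute flip: power_mult)
  then show ?thesis
    by (simp add: qdiff_rhs_def qdiff_rhs_symbol_def power_mult_distrib v_def[symmetric]
        algebra_simps power2_eq_square power3_eq_cube power4_eq_xxxx)
qed

lemma norm_mult_power_less:
  fixes z Q :: "'a::real_normed_div_algebra"
  assumes "norm z < r" and "norm Q \<le> 1"
  shows "norm (z * Q ^ m) < r"
proof -
  have "norm (z * Q ^ m) \<le> norm z"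
    using assms(2) by (simp add: norm_mult norm_power mult_left_le power_le_one)
  with assms(1) show ?thesis
    by linarith
qed

lemma has_power_series2_qdiff_lhs:
  assumes F: "has_power_series2 F G r" and Q: "Q \<noteq> 0" "norm Q \<le> 1"
  shows "has_power_series2 (qdiff_lhs Q d e F)
    (mult_x_coeffs (\<lambda>(j, k). Q ^ j * qdiff_lhs_symbol Q d e k * G (j, k))) r"
  unfolding has_power_series2_def
proof (intro allI impI)
  fix x y :: complex
  assume xy: "norm x < r" "norm y < r"
  note F' = F[unfolded has_power_series2_def, rule_format]
  have xQ: "norm (x * Q) < r" and yQ: "norm (y * Q) < r"
    using norm_mult_power_less[OF _ Q(2), of _ r 1] xy by simp_all
  have "((\<lambda>(j, k). G (j, k) * qdiff_lhs Q d e (\<lambda>x y. x ^ j * y ^ k) x y)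
      has_sum qdiff_lhs Q d e F x y) UNIV"
    unfolding qdiff_lhs_def[of _ _ _ F]
    by (rule has_sum_cong[THEN iffD1, rotated],
        (rule has_sum_cmult_right has_sum_add has_sum_diff F' xQ yQ xy norm_mult_power_less Q)+)
       (auto simp: qdiff_lhs_def algebra_simps diff_divide_distrib add_divide_distrib)
  then have "((\<lambda>(j, k). (Q ^ j * qdiff_lhs_symbol Q d e k * G (j, k)) * x ^ Suc j * y ^ k)
      has_sum qdiff_lhs Q d e F x y) UNIV"
    by (simp add: qdiff_lhs_monomial[OF Q(1)] case_prod_unfold mult_ac)
  then show "((\<lambda>(j, k). mult_x_coeffs (\<lambda>(j, k). Q ^ j * qdiff_lhs_symbol Q d e k * G (j, k)) (j, k)
      * x ^ j * y ^ k) has_sum qdiff_lhs Q d e F x y) UNIV"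
    using has_sum_mult_x_coeffs[of "\<lambda>(j, k). Q ^ j * qdiff_lhs_symbol Q d e k * G (j, k)"]
    by simp
qed

lemma has_power_series2_qdiff_rhs:
  assumes F: "has_power_series2 F G r" and Q: "norm Q \<le> 1"
  shows "has_power_series2 (qdiff_rhs Q a b c F)
    (mult_y_coeffs (\<lambda>(j, k). qdiff_rhs_symbol Q a b c j k * G (j, k))) r"
  unfolding has_power_series2_def
proof (intro allI impI)
  fix x y :: complex
  assume xy: "norm x < r" "norm y < r"
  note F' = F[unfolded has_power_series2_def, rule_format]
  have xQ: "norm (x * Q) < r" and yQ: "norm (y * Q) < r"
    using norm_mult_power_less[OF _ Q, of _ r 1] xy by simp_all
  have "((\<lambda>(j, k). G (j, k) * qdiff_rhs Q a b c (\<lambda>x y. x ^ j * y ^ k) x y)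
      has_sum qdiff_rhs Q a b c F x y) UNIV"
    unfolding qdiff_rhs_def[of _ _ _ _ F]
    by (rule has_sum_cong[THEN iffD1, rotated],
        (rule has_sum_cmult_right has_sum_add has_sum_diff F' xQ yQ xy norm_mult_power_less Q)+)
       (auto simp: qdiff_rhs_def algebra_simps)
  then have "((\<lambda>(j, k). (qdiff_rhs_symbol Q a b c j k * G (j, k)) * x ^ j * y ^ Suc k)
      has_sum qdiff_rhs Q a b c F x y) UNIV"
    by (simp add: qdiff_rhs_monomial case_prod_unfold mult_ac)
  then show "((\<lambda>(j, k). mult_y_coeffs (\<lambda>(j, k). qdiff_rhs_symbol Q a b c j k * G (j, k)) (j, k)
      * x ^ j * y ^ k) has_sum qdiff_rhs Q a b c F x y) UNIV"
    using has_sum_mult_y_coeffs[of "\<lambda>(j, k). qdiff_rhs_symbol Q a b c j k * G (j, k)"]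
    by simp
qed

lemma qpoch_0 [simp]: "qpoch \<alpha> q 0 = 1"
  by (simp add: qpoch_def)

lemma qpoch_Suc: "qpoch \<alpha> q (Suc m) = qpoch \<alpha> q m * (1 - \<alpha> * complex_of_real q ^ m)"
  by (simp add: qpoch_def)

lemma qpoch_nonzero:
  assumes "norm \<alpha> < 1" and "\<bar>q\<bar> \<le> 1"
  shows "qpoch \<alpha> q m \<noteq> 0"
proof -
  have "norm (\<alpha> * complex_of_real q ^ j) < 1" for j
    using norm_mult_power_less[of \<alpha> 1 "complex_of_real q" j] assms by simp
  then have "1 - \<alpha> * complex_of_real q ^ j \<noteq> 0" for j
    by (metis norm_one order_less_irrefl right_minus_eq)
  then show ?thesis
    by (simp add: qpoch_def)
qed

lemma qpoch_q_nonzero: "0 < q \<Longrightarrow> q < 1 \<Longrightarrow> qpoch (complex_of_real q) q m \<noteq> 0"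
  by (rule qpoch_nonzero) auto

lemma psi_coeff_0: "0 < q \<Longrightarrow> q < 1 \<Longrightarrow> psi_coeff a b c d e q n 0 = 1"
  using qpoch_q_nonzero[of q n] by (simp add: psi_coeff_def qbinom_def)

lemma qbinom_Suc_right:
  assumes "0 < q" "q < 1"
  shows "qbinom q (Suc (j + k)) (Suc k) * (1 - complex_of_real q ^ Suc k) =
    qbinom q (Suc (j + k)) k * (1 - complex_of_real q ^ Suc j)"
proof -
  have "qpoch (complex_of_real q) q (Suc m) \<noteq> 0" for m
    using qpoch_q_nonzero[OF assms] .
  then have "qpoch (complex_of_real q) q m \<noteq> 0" "1 - complex_of_real q ^ Suc m \<noteq> 0" for m
    by (simp_all add: qpoch_Suc)
  then show ?thesis
    by (simp add: qbinom_def Suc_diff_le qpoch_Suc field_simps)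
qed

lemma powi_psi_exponent_Suc:
  fixes q :: real
  assumes "q \<noteq> 0"
  shows "q powi (int (Suc k) * (int (Suc k) - int (Suc (j + k)))) * q ^ j =
    q powi (int k * (int k - int (Suc (j + k)))) * q ^ k"
proof -
  have "int (Suc k) * (int (Suc k) - int (Suc (j + k))) = - int (j * k) - int j"
    "int k * (int k - int (Suc (j + k))) = - int (j * k) - int k"
    by (simp_all add: algebra_simps)
  with assms show ?thesis
    by (simp add: power_int_diff)
qed

lemma qdiff_lhs_symbol_Suc:
  "Q \<noteq> 0 \<Longrightarrow> qdiff_lhs_symbol Q d e (Suc k) = (1 - Q ^ Suc k) * (1 - d * Q ^ k) * (1 - e * Q ^ k)"
  by (simp add: qdiff_lhs_symbol_def)

lemma psi_coeff_recurrence: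
  assumes q: "0 < q" "q < 1"
    and d: "qpoch d q (Suc k) \<noteq> 0" and e: "qpoch e q (Suc k) \<noteq> 0"
  shows "complex_of_real q ^ j * qdiff_lhs_symbol (complex_of_real q) d e (Suc k) *
      psi_coeff a b c d e q (Suc (j + k)) (Suc k) =
    qdiff_rhs_symbol (complex_of_real q) a b c (Suc j) k * psi_coeff a b c d e q (Suc (j + k)) k"
proof -
  define Q where "Q = complex_of_real q"
  define n where "n = Suc (j + k)"
  define w where "w m = complex_of_real (q powi (int m * (int m - int n)))" for m
  define A where "A = 1 - a * Q ^ k"
  define B where "B = 1 - b * Q ^ k"
  define C where "C = 1 - c * Q ^ k"
  define D where "D = 1 - d * Q ^ k"
  define E where "E = 1 - e * Q ^ k"
  define Z where "Z = - ((-1) ^ k * qpoch a q k * qpoch b q k * qpoch c q k * A * B * C /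
    (qpoch d q k * qpoch e q k))"
  have Q: "Q \<noteq> 0"
    using q by (simp add: Q_def)
  have de: "qpoch d q k \<noteq> 0" "D \<noteq> 0" "qpoch e q k \<noteq> 0" "E \<noteq> 0"
    using d e by (simp_all add: qpoch_Suc Q_def D_def E_def)
  have psi: "psi_coeff a b c d e q n m =
      qbinom q n m * (-1) ^ m * w m * (qpoch a q m * qpoch b q m * qpoch c q m) /
      (qpoch d q m * qpoch e q m)" for m
    by (simp add: psi_coeff_def w_def)
  have "Q ^ j * qdiff_lhs_symbol Q d e (Suc k) * psi_coeff a b c d e q n (Suc k) =
      (qbinom q n (Suc k) * (1 - Q ^ Suc k)) * (w (Suc k) * Q ^ j) * Z"
    unfolding psi qdiff_lhs_symbol_Suc[OF Q] qpoch_Suc Q_def[symmetric]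
      A_def[symmetric] B_def[symmetric] C_def[symmetric] D_def[symmetric] E_def[symmetric]
    using de by (simp add: Z_def field_simps)
  also have "\<dots> = (qbinom q n k * (1 - Q ^ Suc j)) * (w k * Q ^ k) * Z"
  proof -
    have "w (Suc k) * Q ^ j = w k * Q ^ k"
      using powi_psi_exponent_Suc[of q k j] q unfolding w_def Q_def n_def
      by (metis of_real_mult of_real_power order_less_irrefl)
    then show ?thesis
      using qbinom_Suc_right[OF q, of j k] by (simp add: n_def Q_def)
  qed
  also have "\<dots> = qdiff_rhs_symbol Q a b c (Suc j) k * psi_coeff a b c d e q n k"
    unfolding psi qdiff_rhs_symbol_def A_def[symmetric] B_def[symmetric] C_def[symmetric]
    using de by (simp add: Z_def field_simps)
  finally show ?thesis
    by (simp add: Q_def n_def)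
qed

lemma qdiff_lhs_symbol_Suc_nonzero:
  assumes q: "0 < q" "q < 1"
    and d: "qpoch d q (Suc k) \<noteq> 0" and e: "qpoch e q (Suc k) \<noteq> 0"
  shows "qdiff_lhs_symbol (complex_of_real q) d e (Suc k) \<noteq> 0"
  using qpoch_q_nonzero[OF q, of "Suc k"] d e q by (simp add: qdiff_lhs_symbol_Suc qpoch_Suc)

lemma recurrence_iff_psi_coeff_expansion:
  fixes G :: "nat \<times> nat \<Rightarrow> complex"
  assumes q: "0 < q" "q < 1"
    and d: "\<And>m. qpoch d q m \<noteq> 0" and e: "\<And>m. qpoch e q m \<noteq> 0"
  shows "(\<forall>j k.
      complex_of_real q ^ j * qdiff_lhs_symbol (complex_of_real q) d e (Suc k) * G (j, Suc k) =
      qdiff_rhs_symbol (complex_of_real q) a b c (Suc j) k * G (Suc j, k)) \<longleftrightarrow>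
    (\<forall>j k. G (j, k) = G (j + k, 0) * psi_coeff a b c d e q (j + k) k)"
    (is "(\<forall>j k. ?L j k * G (j, Suc k) = ?R j k * G (Suc j, k)) \<longleftrightarrow> _")
proof -
  let ?psi = "psi_coeff a b c d e q"
  have psi_rec: "?R j k * ?psi (Suc (j + k)) k = ?L j k * ?psi (Suc (j + k)) (Suc k)" for j k
    using psi_coeff_recurrence[OF q d e] by simp
  show ?thesis
  proof
    assume rec: "\<forall>j k. ?L j k * G (j, Suc k) = ?R j k * G (Suc j, k)"
    have "G (j, k) = G (j + k, 0) * ?psi (j + k) k" for j k
    proof (induction k arbitrary: j)
      case 0
      show ?case
        using q by (simp add: psi_coeff_0)
    next
      case (Suc k)
      have "?L j k * G (j, Suc k) = ?R j k * G (Suc j, k)"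
        using rec by blast
      also have "\<dots> = G (Suc (j + k), 0) * (?R j k * ?psi (Suc (j + k)) k)"
        using Suc.IH[of "Suc j"] by (simp only: add_Suc mult.left_commute)
      also have "\<dots> = ?L j k * (G (Suc (j + k), 0) * ?psi (Suc (j + k)) (Suc k))"
        by (simp only: psi_rec mult.left_commute)
      finally show ?case
        using qdiff_lhs_symbol_Suc_nonzero[OF q d e] q by simp
    qed
    then show "\<forall>j k. G (j, k) = G (j + k, 0) * ?psi (j + k) k"
      by blast
  next
    assume expansion: "\<forall>j k. G (j, k) = G (j + k, 0) * ?psi (j + k) k"
    show "\<forall>j k. ?L j k * G (j, Suc k) = ?R j k * G (Suc j, k)"
    proof (intro allI)
      fix j k
      have "?L j k * G (j, Suc k) = G (Suc (j + k), 0) * (?L j k * ?psi (Suc (j + k)) (Suc k))"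
        using expansion[rule_format, of j "Suc k"] by (simp only: add_Suc_right mult.left_commute)
      also have "\<dots> = ?R j k * G (Suc j, k)"
        using expansion[rule_format, of "Suc j" k]
        by (simp only: psi_rec[symmetric] add_Suc mult.left_commute)
      finally show "?L j k * G (j, Suc k) = ?R j k * G (Suc j, k)" .
    qed
  qed
qed

lemma qdiff_equation_iff_psi_coeff_expansion:
  assumes q: "0 < q" "q < 1" and d: "norm d < 1" and e: "norm e < 1"
    and F: "has_power_series2 F G r" and \<rho>: "0 < \<rho>" "\<rho> \<le> r"
  shows "(\<forall>x y. norm x < \<rho> \<longrightarrow> norm y < \<rho> \<longrightarrow>
      qdiff_lhs (complex_of_real q) d e F x y = qdiff_rhs (complex_of_real q) a b c F x y) \<longleftrightarrow>
    (\<forall>j k. G (j, k) = G (j + k, 0) * psi_coeff a b c d e q (j + k) k)"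
proof -
  define Q where "Q = complex_of_real q"
  have Q: "Q \<noteq> 0" "norm Q \<le> 1"
    using q by (simp_all add: Q_def)
  have F\<rho>: "has_power_series2 F G \<rho>"
    using F \<rho>(2) by (rule has_power_series2_mono)
  have "(\<forall>x y. norm x < \<rho> \<longrightarrow> norm y < \<rho> \<longrightarrow> qdiff_lhs Q d e F x y = qdiff_rhs Q a b c F x y)
      \<longleftrightarrow> mult_x_coeffs (\<lambda>(j, k). Q ^ j * qdiff_lhs_symbol Q d e k * G (j, k)) =
          mult_y_coeffs (\<lambda>(j, k). qdiff_rhs_symbol Q a b c j k * G (j, k))"
    by (rule has_power_series2_eq_iff[OF \<rho>(1) has_power_series2_qdiff_lhs[OF F\<rho> Q]
          has_power_series2_qdiff_rhs[OF F\<rho> Q(2)]])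
  also have "\<dots> \<longleftrightarrow> (\<forall>j k. Q ^ j * qdiff_lhs_symbol Q d e (Suc k) * G (j, Suc k) =
      qdiff_rhs_symbol Q a b c (Suc j) k * G (Suc j, k))"
    using mult_x_coeffs_eq_mult_y_coeffs_iff[of
        "\<lambda>(j, k). Q ^ j * qdiff_lhs_symbol Q d e k * G (j, k)"
        "\<lambda>(j, k). qdiff_rhs_symbol Q a b c j k * G (j, k)"]
    by (simp add: qdiff_lhs_symbol_def qdiff_rhs_symbol_def)
  also have "\<dots> \<longleftrightarrow> (\<forall>j k. G (j, k) = G (j + k, 0) * psi_coeff a b c d e q (j + k) k)"
    unfolding Q_def
    by (rule recurrence_iff_psi_coeff_expansion[OF q]) (use q d e qpoch_nonzero in auto)
  finally show ?thesis
    by (simp add: Q_def)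
qed

lemma qdiff_equation_imp_psi_expansion:
  assumes q: "0 < q" "q < 1" and an: "analytic_at_origin7 f"
    and "\<exists>r>0. \<forall>a b c d e x y. norm a < r \<and> norm b < r \<and> norm c < r \<and> norm d < r \<and>
      norm e < r \<and> norm x < r \<and> norm y < r \<longrightarrow>
      qdiff_lhs (complex_of_real q) d e (f a b c d e) x y =
      qdiff_rhs (complex_of_real q) a b c (f a b c d e) x y"
  shows "\<exists>r>0. \<exists>\<mu>. \<forall>a b c d e. norm a < r \<and> norm b < r \<and> norm c < r \<and> norm d < r \<and> norm e < r \<longrightarrow>
      (\<forall>j k. taylor_coeff2 (f a b c d e) j k =
        \<mu> (j + k) a b c d e * psi_coeff a b c d e q (j + k) k)"
proof -
  obtain r where "r > 0" and eq: "\<And>a b c d e x y. norm a < r \<and> norm b < r \<and> norm c < r \<and>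
      norm d < r \<and> norm e < r \<and> norm x < r \<and> norm y < r \<Longrightarrow>
      qdiff_lhs (complex_of_real q) d e (f a b c d e) x y =
      qdiff_rhs (complex_of_real q) a b c (f a b c d e) x y"
    using assms(4) by blast
  obtain r0 where "r0 > 0" and f: "\<And>a b c d e. norm a < r0 \<Longrightarrow> norm b < r0 \<Longrightarrow> norm c < r0 \<Longrightarrow>
      norm d < r0 \<Longrightarrow> norm e < r0 \<Longrightarrow>
      has_power_series2 (f a b c d e) (\<lambda>(j, k). taylor_coeff2 (f a b c d e) j k) r0"
    using analytic_at_origin7_power_series2[OF an] by blast
  define \<rho> where "\<rho> = min (min r r0) 1"
  have \<rho>: "0 < \<rho>" "\<rho> \<le> r" "\<rho> \<le> r0" "\<rho> \<le> 1"
    using \<open>r > 0\<close> \<open>r0 > 0\<close> by (auto simp: \<rho>_def)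
  have "\<forall>j k. taylor_coeff2 (f a b c d e) j k =
      taylor_coeff2 (f a b c d e) (j + k) 0 * psi_coeff a b c d e q (j + k) k"
    if small: "norm a < \<rho> \<and> norm b < \<rho> \<and> norm c < \<rho> \<and> norm d < \<rho> \<and> norm e < \<rho>" for a b c d e
  proof -
    have "norm d < 1" "norm e < 1"
      and "has_power_series2 (f a b c d e) (\<lambda>(j, k). taylor_coeff2 (f a b c d e) j k) r0"
      using small \<rho> f by auto
    note iff = qdiff_equation_iff_psi_coeff_expansion[OF q this \<rho>(1,3), unfolded prod.case]
    have "\<forall>x y. norm x < \<rho> \<longrightarrow> norm y < \<rho> \<longrightarrow>
        qdiff_lhs (complex_of_real q) d e (f a b c d e) x y =
        qdiff_rhs (complex_of_real q) a b c (f a b c d e) x y"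
      using small \<rho> by (intro allI impI eq) auto
    then show ?thesis
      by (rule iff[THEN iffD1])
  qed
  then show ?thesis
    using \<rho>(1) by (intro exI[where x = \<rho>] conjI
        exI[where x = "\<lambda>n a b c d e. taylor_coeff2 (f a b c d e) n 0"]) blast+
qed

lemma psi_expansion_imp_qdiff_equation:
  assumes q: "0 < q" "q < 1" and an: "analytic_at_origin7 f"
    and "\<exists>r>0. \<exists>\<mu>. \<forall>a b c d e. norm a < r \<and> norm b < r \<and> norm c < r \<and> norm d < r \<and> norm e < r \<longrightarrow>
      (\<forall>j k. taylor_coeff2 (f a b c d e) j k =
        \<mu> (j + k) a b c d e * psi_coeff a b c d e q (j + k) k)"
  shows "\<exists>r>0. \<forall>a b c d e x y. norm a < r \<and> norm b < r \<and> norm c < r \<and> norm d < r \<and>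
      norm e < r \<and> norm x < r \<and> norm y < r \<longrightarrow>
      qdiff_lhs (complex_of_real q) d e (f a b c d e) x y =
      qdiff_rhs (complex_of_real q) a b c (f a b c d e) x y"
proof -
  obtain r \<mu> where "r > 0" and expansion: "\<And>a b c d e. norm a < r \<and> norm b < r \<and> norm c < r \<and>
      norm d < r \<and> norm e < r \<Longrightarrow>
      \<forall>j k. taylor_coeff2 (f a b c d e) j k = \<mu> (j + k) a b c d e * psi_coeff a b c d e q (j + k) k"
    using assms(4) by blast
  obtain r0 where "r0 > 0" and f: "\<And>a b c d e. norm a < r0 \<Longrightarrow> norm b < r0 \<Longrightarrow> norm c < r0 \<Longrightarrow>
      norm d < r0 \<Longrightarrow> norm e < r0 \<Longrightarrow>
      has_power_series2 (f a b c d e) (\<lambda>(j, k). taylor_coeff2 (f a b c d e) j k) r0"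
    using analytic_at_origin7_power_series2[OF an] by blast
  define \<rho> where "\<rho> = min (min r r0) 1"
  have \<rho>: "0 < \<rho>" "\<rho> \<le> r" "\<rho> \<le> r0" "\<rho> \<le> 1"
    using \<open>r > 0\<close> \<open>r0 > 0\<close> by (auto simp: \<rho>_def)
  have eq: "\<forall>x y. norm x < \<rho> \<longrightarrow> norm y < \<rho> \<longrightarrow>
      qdiff_lhs (complex_of_real q) d e (f a b c d e) x y =
      qdiff_rhs (complex_of_real q) a b c (f a b c d e) x y"
    if small: "norm a < \<rho> \<and> norm b < \<rho> \<and> norm c < \<rho> \<and> norm d < \<rho> \<and> norm e < \<rho>" for a b c d e
  proof -
    have "norm d < 1" "norm e < 1"
      and "has_power_series2 (f a b c d e) (\<lambda>(j, k). taylor_coeff2 (f a b c d e) j k) r0"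
      using small \<rho> f by auto
    note iff = qdiff_equation_iff_psi_coeff_expansion[OF q this \<rho>(1,3), unfolded prod.case]
    have "\<forall>j k. taylor_coeff2 (f a b c d e) j k =
        \<mu> (j + k) a b c d e * psi_coeff a b c d e q (j + k) k"
      using small \<rho> by (intro expansion) auto
    then have "\<forall>j k. taylor_coeff2 (f a b c d e) j k =
        taylor_coeff2 (f a b c d e) (j + k) 0 * psi_coeff a b c d e q (j + k) k"
      using psi_coeff_0[OF q] by simp
    then show ?thesis
      by (rule iff[THEN iffD2])
  qed
  show ?thesis
    using \<rho>(1) by (intro exI[where x = \<rho>] conjI allI impI; (elim conjE)?) (simp_all add: eq)
qed

theorem theorem1:
  fixes q :: real
    and f :: "complex \<Rightarrow> complex \<Rightarrow> complex \<Rightarrow> complex \<Rightarrow> complex \<Rightarrow> complex \<Rightarrow> complex \<Rightarrow> complex"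
  assumes q: "0 < q" "q < 1"
    and an: "analytic_at_origin7 f"
  shows
   "(\<exists>r>0. \<forall>a b c d e x y. norm a < r \<and> norm b < r \<and> norm c < r \<and> norm d < r \<and>
        norm e < r \<and> norm x < r \<and> norm y < r \<longrightarrow>
      (let F = f a b c d e; Q = complex_of_real q in
        x * (F (x*Q) y - F (x*Q) (y*Q)
             - (d + e) / Q * (F (x*Q) (y*Q) - F (x*Q) (y*Q^2))
             + d * e / Q^2 * (F (x*Q) (y*Q^2) - F (x*Q) (y*Q^3)))
      = y * ((F (x*Q) (y*Q) - F x (y*Q))
             - (a + b + c) * (F (x*Q) (y*Q^2) - F x (y*Q^2))
             + (a*b + a*c + b*c) * (F (x*Q) (y*Q^3) - F x (y*Q^3))
             - a*b*c * (F (x*Q) (y*Q^4) - F x (y*Q^4)))))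
    \<longleftrightarrow>
    (\<exists>r>0. \<exists>\<mu> :: nat \<Rightarrow> complex \<Rightarrow> complex \<Rightarrow> complex \<Rightarrow> complex \<Rightarrow> complex \<Rightarrow> complex.
       \<forall>a b c d e. norm a < r \<and> norm b < r \<and> norm c < r \<and> norm d < r \<and> norm e < r \<longrightarrow>
         (\<forall>j k. taylor_coeff2 (f a b c d e) j k =
                 \<mu> (j + k) a b c d e * psi_coeff a b c d e q (j + k) k))"
  unfolding Let_def qdiff_lhs_def[symmetric] qdiff_rhs_def[symmetric]
  using qdiff_equation_imp_psi_expansion[OF q an] psi_expansion_imp_qdiff_equation[OF q an]
  by (rule iffI)

end
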